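(* Let $p$ be an odd prime and let $h,a$ be integers with $1\le h,a\le p-1$ and $\gcd(h,a,p-1)=1$. Then $h^{h}\equiv a^{a}\pmod p$ if and only if there exists an integer $g$ with $1\le g\le p-1$ such that \[ g^{h}\equiv a \pmod p\quad\text{and}\quad g^{a}\equiv h\pmod p, \] and in that case such $g$ is unique (explicitly, $g\equiv h^{v_0}a^{u_0}\pmod p$ for any integers $u_0,v_0$ with $u_0h+v_0a\equiv 1\pmod{p-1}$). Consequently, triples $(g,h,a)$ satisfying the two congruences above correspond bijectively (via $(g,h,a)\mapsto(h,a)$) to pairs $(h,a)$ satisfying $h^h\equiv a^a\pmod p$, among those with $\gcd(h,a,p-1)=1$; in particular this holds whenever $\gcd(h,p-1)=1$ or $\gcd(a,p-1)=1$. *)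

theory Defs
  imports "HOL-Number_Theory.Number_Theory"
begin

end

theory Submission
  imports Defs
begin

(* Since gcd(h, a, p - 1) = 1 there are u, v with u h + v a = 1 (mod p - 1), so by Fermat
   any g prime to p with g^h = a and g^a = h satisfies g = g^(u h + v a) = (g^h)^u (g^a)^v = a^u h^v;
   this gives uniqueness and, with integer u, v split into positive and negative parts, the
   explicit formula. Conversely, if h^h = a^a then g = h^v a^u works:
   g^h = (h^h)^v a^(u h) = a^(v a + u h) = a, and symmetrically g^a = h.
   All congruences are mod p. *)

lemma power_cong_exponent_mod_pred:
  fixes p x m n :: nat
  assumes "prime p" "\<not> p dvd x" "[m = n] (mod p - 1)"
  shows "[x ^ m = x ^ n] (mod p)"
proof -
  have "ord p x dvd p - 1"
    using fermat_theorem[OF assms(1,2)] ord_divides by blast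
  moreover have "coprime p x"
    using assms(1,2) by (simp add: prime_imp_coprime)
  ultimately show ?thesis
    using assms(3) by (simp add: order_divides_expdiff cong_dvd_modulus_nat)
qed

lemma cong_lincomb_eq_1_nat:
  fixes h a m :: nat
  assumes "gcd (gcd h a) m = 1" "m > 0"
  shows "\<exists>u v. [u * h + v * a = 1] (mod m)"
proof -
  obtain s t where st: "s * int h + t * int a = int (gcd h a)"
    using bezout_int[of "int h" "int a"] by (auto simp: gcd_int_int_eq)
  obtain x y where xy: "x * int (gcd h a) + y * int m = 1"
    using bezout_int[of "int (gcd h a)" "int m"] assms(1) by (metis gcd_int_int_eq of_nat_1)
  have "(x * s) * int h + (x * t) * int a = x * (s * int h + t * int a)"
    by (simp add: algebra_simps)
  also have "\<dots> = 1 - y * int m"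
    using st xy by simp
  finally have lincomb: "[(x * s) * int h + (x * t) * int a = 1] (mod int m)"
    by (simp add: cong_iff_dvd_diff)
  define u v where "u = nat ((x * s) mod m)" and "v = nat ((x * t) mod m)"
  have "[int (u * h + v * a) = (x * s) * int h + (x * t) * int a] (mod int m)"
    using assms(2) unfolding u_def v_def
    by simp (intro cong_add cong_mult cong_refl; simp add: cong_def)
  with lincomb have "[int (u * h + v * a) = int 1] (mod int m)"
    by (auto intro: cong_trans)
  then show ?thesis
    unfolding cong_int_iff by blast
qed

lemma cong_int_lincomb_split:
  fixes h a m :: nat and u v :: int
  assumes "[u * int h + v * int a = 1] (mod int m)"
  shows "[nat u * h + nat v * a = 1 + nat (- u) * h + nat (- v) * a] (mod m)"
proof -
  have "int (nat u * h + nat v * a) - int (1 + nat (- u) * h + nat (- v) * a)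
      = u * int h + v * int a - 1"
    by (simp add: algebra_simps)
  then have "[int (nat u * h + nat v * a) = int (1 + nat (- u) * h + nat (- v) * a)] (mod int m)"
    using assms by (simp only: cong_iff_dvd_diff)
  then show ?thesis
    by (simp only: cong_int_iff)
qed

lemma not_dvd_if_mem_range:
  fixes p x :: nat
  assumes "x \<in> {1..p - 1}"
  shows "\<not> p dvd x"
  using assms by (auto dest: dvd_imp_le)

lemma mod_mem_range_if_not_dvd:
  fixes p x :: nat
  assumes "p > 0" "\<not> p dvd x"
  shows "x mod p \<in> {1..p - 1}"
  using assms by (auto simp: dvd_eq_mod_eq_0 less_Suc_eq_le[symmetric])

lemma power_lincomb_cong_if_mutual_powers:
  fixes g h a m u v :: nat
  assumes "[g ^ h = a] (mod m)" "[g ^ a = h] (mod m)"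
  shows "[g ^ (u * h + v * a) = a ^ u * h ^ v] (mod m)"
proof -
  have "g ^ (u * h + v * a) = (g ^ h) ^ u * (g ^ a) ^ v"
    by (simp add: power_add power_mult mult.commute)
  also have "[\<dots> = a ^ u * h ^ v] (mod m)"
    using assms by (intro cong_mult cong_pow)
  finally show ?thesis .
qed

lemma self_powers_cong_if_mutual_powers:
  fixes g h a m :: nat
  assumes "[g ^ h = a] (mod m)" "[g ^ a = h] (mod m)"
  shows "[h ^ h = a ^ a] (mod m)"
proof -
  have "[h ^ h = (g ^ a) ^ h] (mod m)"
    using assms(2) by (intro cong_pow) (rule cong_sym)
  also have "(g ^ a) ^ h = (g ^ h) ^ a"
    by (simp add: power_mult[symmetric] mult.commute)
  also have "[\<dots> = a ^ a] (mod m)"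
    using assms(1) by (rule cong_pow)
  finally show ?thesis .
qed

lemma mutual_powers_base_cong:
  fixes p g h a u v :: nat
  assumes "prime p" "\<not> p dvd g" "[g ^ h = a] (mod p)" "[g ^ a = h] (mod p)"
    and "[u * h + v * a = 1] (mod p - 1)"
  shows "[g = a ^ u * h ^ v] (mod p)"
proof -
  have "[g ^ 1 = g ^ (u * h + v * a)] (mod p)"
    using assms(1,2,5) by (intro power_cong_exponent_mod_pred) (simp_all add: cong_sym)
  also have "[g ^ (u * h + v * a) = a ^ u * h ^ v] (mod p)"
    using assms(3,4) by (rule power_lincomb_cong_if_mutual_powers)
  finally show ?thesis
    by simp
qed

lemma mutual_powers_base_explicit:
  fixes p g h a :: nat and u v :: int
  assumes "prime p" "\<not> p dvd g" "[g ^ h = a] (mod p)" "[g ^ a = h] (mod p)"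
    and "[u * int h + v * int a = 1] (mod int (p - 1))"
  shows "[int g * int h ^ nat (- v) * int a ^ nat (- u) = int h ^ nat v * int a ^ nat u] (mod int p)"
proof -
  have "[g * (a ^ nat (- u) * h ^ nat (- v)) = g ^ (1 + nat (- u) * h + nat (- v) * a)] (mod p)"
    using power_lincomb_cong_if_mutual_powers[OF assms(3,4), of "nat (- u)" "nat (- v)"]
    by (simp add: add.assoc cong_sym cong_scalar_left)
  also have "[g ^ (1 + nat (- u) * h + nat (- v) * a) = g ^ (nat u * h + nat v * a)] (mod p)"
    using assms(1,2) cong_int_lincomb_split[OF assms(5)]
    by (intro power_cong_exponent_mod_pred) (simp_all add: cong_sym)
  also have "[g ^ (nat u * h + nat v * a) = a ^ nat u * h ^ nat v] (mod p)"
    using assms(3,4) by (rule power_lincomb_cong_if_mutual_powers)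
  finally have "[g * h ^ nat (- v) * a ^ nat (- u) = h ^ nat v * a ^ nat u] (mod p)"
    by (simp add: ac_simps)
  then show ?thesis
    by (simp only: of_nat_power[symmetric] of_nat_mult[symmetric] cong_int_iff)
qed

lemma power_cong_if_self_powers_cong:
  fixes p h a u v :: nat
  assumes "prime p" "\<not> p dvd a" "[h ^ h = a ^ a] (mod p)" "[u * h + v * a = 1] (mod p - 1)"
  shows "[(h ^ v * a ^ u) ^ h = a] (mod p)"
proof -
  have "(h ^ v * a ^ u) ^ h = (h ^ h) ^ v * a ^ (u * h)"
    by (simp add: power_mult_distrib power_mult[symmetric] mult.commute)
  also have "[\<dots> = (a ^ a) ^ v * a ^ (u * h)] (mod p)"
    using assms(3) by (intro cong_mult cong_pow cong_refl)
  also have "(a ^ a) ^ v * a ^ (u * h) = a ^ (u * h + v * a)"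
    by (simp add: power_add power_mult[symmetric] mult.commute)
  also have "[a ^ (u * h + v * a) = a ^ 1] (mod p)"
    using assms(1,2,4) by (rule power_cong_exponent_mod_pred)
  finally show ?thesis
    by simp
qed

lemma mutual_powers_solvable_iff:
  fixes p h a :: nat
  assumes "prime p" and h: "\<not> p dvd h" and a: "\<not> p dvd a"
    and coprime: "gcd (gcd h a) (p - 1) = 1"
  shows "[h ^ h = a ^ a] (mod p) \<longleftrightarrow> (\<exists>g \<in> {1..p - 1}. [g ^ h = a] (mod p) \<and> [g ^ a = h] (mod p))"
proof
  assume self_powers: "[h ^ h = a ^ a] (mod p)"
  have "p > 1"
    using assms(1) prime_gt_1_nat by blast
  then obtain u v where uv: "[u * h + v * a = 1] (mod p - 1)"
    using cong_lincomb_eq_1_nat[OF coprime] by auto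
  define g where "g = (h ^ v * a ^ u) mod p"
  have "\<not> p dvd h ^ v * a ^ u"
    using assms(1) h a by (metis prime_dvd_mult_iff prime_dvd_power)
  then have "g \<in> {1..p - 1}"
    unfolding g_def using \<open>p > 1\<close> by (intro mod_mem_range_if_not_dvd) simp_all
  moreover have "[g ^ h = a] (mod p)"
    using power_cong_if_self_powers_cong[OF assms(1) a self_powers uv]
    by (simp add: g_def power_mod cong_def)
  moreover have "[g ^ a = h] (mod p)"
    using power_cong_if_self_powers_cong[OF assms(1) h cong_sym[OF self_powers], of v u] uv
    by (simp add: g_def power_mod cong_def ac_simps)
  ultimately show "\<exists>g \<in> {1..p - 1}. [g ^ h = a] (mod p) \<and> [g ^ a = h] (mod p)"
    by blast
qed (auto intro: self_powers_cong_if_mutual_powers)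

lemma mutual_powers_base_unique:
  fixes p h a g1 g2 :: nat
  assumes "prime p" "gcd (gcd h a) (p - 1) = 1" "g1 \<in> {1..p - 1}" "g2 \<in> {1..p - 1}"
    and "[g1 ^ h = a] (mod p)" "[g1 ^ a = h] (mod p)" "[g2 ^ h = a] (mod p)" "[g2 ^ a = h] (mod p)"
  shows "g1 = g2"
proof -
  obtain u v where uv: "[u * h + v * a = 1] (mod p - 1)"
    using cong_lincomb_eq_1_nat[OF assms(2)] prime_gt_1_nat[OF assms(1)] by auto
  have "[g1 = g2] (mod p)"
    using mutual_powers_base_cong[OF assms(1) _ assms(5,6) uv]
      mutual_powers_base_cong[OF assms(1) _ assms(7,8) uv] assms(3,4)
    by (metis cong_sym cong_trans not_dvd_if_mem_range)
  moreover have "g1 < p" "g2 < p"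
    using assms(3,4) by auto
  ultimately show ?thesis
    by (simp add: cong_def)
qed

lemma bij_betw_mutual_powers_self_powers:
  fixes p :: nat
  assumes "prime p"
  shows "bij_betw (\<lambda>(g, h, a). (h, a))
    {(g, h, a). g \<in> {1..p-1} \<and> h \<in> {1..p-1} \<and> a \<in> {1..p-1} \<and>
       gcd (gcd h a) (p - 1) = 1 \<and> [g ^ h = a] (mod p) \<and> [g ^ a = h] (mod p)}
    {(h, a). h \<in> {1..p-1} \<and> a \<in> {1..p-1} \<and>
       gcd (gcd h a) (p - 1) = 1 \<and> [h ^ h = a ^ a] (mod p)}"
  (is "bij_betw ?forget ?triples ?pairs")
proof (rule bij_betwI')
  fix x y
  assume triples: "x \<in> ?triples" "y \<in> ?triples"
  show "?forget x = ?forget y \<longleftrightarrow> x = y"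
  proof
    assume "?forget x = ?forget y"
    with triples obtain g g' h a where xy: "x = (g, h, a)" "y = (g', h, a)"
      and coprime: "gcd (gcd h a) (p - 1) = 1" and range: "g \<in> {1..p-1}" "g' \<in> {1..p-1}"
      and mutual: "[g ^ h = a] (mod p)" "[g ^ a = h] (mod p)" "[g' ^ h = a] (mod p)" "[g' ^ a = h] (mod p)"
      by auto
    then show "x = y"
      using mutual_powers_base_unique[OF assms(1) coprime range mutual] by simp
  qed simp
next
  fix x
  assume "x \<in> ?triples"
  then obtain g h a where x: "x = (g, h, a)" and range: "h \<in> {1..p-1}" "a \<in> {1..p-1}"
    and coprime: "gcd (gcd h a) (p - 1) = 1"
    and mutual: "[g ^ h = a] (mod p)" "[g ^ a = h] (mod p)"
    by auto
  have "[h ^ h = a ^ a] (mod p)"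
    using mutual by (rule self_powers_cong_if_mutual_powers)
  then show "?forget x \<in> ?pairs"
    using x range coprime by simp
next
  fix y
  assume "y \<in> ?pairs"
  then obtain h a where y: "y = (h, a)" and range: "h \<in> {1..p-1}" "a \<in> {1..p-1}"
    and coprime: "gcd (gcd h a) (p - 1) = 1" and self_powers: "[h ^ h = a ^ a] (mod p)"
    by auto
  then obtain g where "g \<in> {1..p-1}" "[g ^ h = a] (mod p)" "[g ^ a = h] (mod p)"
    using mutual_powers_solvable_iff[OF assms(1) range[THEN not_dvd_if_mem_range] coprime] by blast
  then show "\<exists>x \<in> ?triples. y = ?forget x"
    using y range coprime by (intro bexI[of _ "(g, h, a)"]) auto
qed

theorem mainTheorem5:
  fixes p :: nat
  assumes "prime p" and "odd p"
  shows "(\<forall>h a. h \<in> {1..p-1} \<longrightarrow> a \<in> {1..p-1} \<longrightarrow> gcd (gcd h a) (p - 1) = 1 \<longrightarrow>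
            ([h ^ h = a ^ a] (mod p) \<longleftrightarrow>
               (\<exists>g \<in> {1..p-1}. [g ^ h = a] (mod p) \<and> [g ^ a = h] (mod p)))
          \<and> (\<forall>g1 \<in> {1..p-1}. \<forall>g2 \<in> {1..p-1}.
               [g1 ^ h = a] (mod p) \<and> [g1 ^ a = h] (mod p) \<and>
               [g2 ^ h = a] (mod p) \<and> [g2 ^ a = h] (mod p) \<longrightarrow> g1 = g2)
          \<and> (\<forall>g \<in> {1..p-1}. \<forall>u0 v0 :: int.
               [g ^ h = a] (mod p) \<and> [g ^ a = h] (mod p) \<and>
               [u0 * int h + v0 * int a = 1] (mod int (p - 1)) \<longrightarrow>
               [int g * int h ^ nat (- v0) * int a ^ nat (- u0)
                  = int h ^ nat v0 * int a ^ nat u0] (mod int p)))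
       \<and> bij_betw (\<lambda>(g, h, a). (h, a))
           {(g, h, a). g \<in> {1..p-1} \<and> h \<in> {1..p-1} \<and> a \<in> {1..p-1} \<and>
              gcd (gcd h a) (p - 1) = 1 \<and> [g ^ h = a] (mod p) \<and> [g ^ a = h] (mod p)}
           {(h, a). h \<in> {1..p-1} \<and> a \<in> {1..p-1} \<and>
              gcd (gcd h a) (p - 1) = 1 \<and> [h ^ h = a ^ a] (mod p)}"
proof (intro conjI allI impI bij_betw_mutual_powers_self_powers[OF assms(1)])
  fix h a :: nat
  assume range: "h \<in> {1..p - 1}" "a \<in> {1..p - 1}" and coprime: "gcd (gcd h a) (p - 1) = 1"
  show "[h ^ h = a ^ a] (mod p) \<longleftrightarrow> (\<exists>g \<in> {1..p - 1}. [g ^ h = a] (mod p) \<and> [g ^ a = h] (mod p))"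
    using assms(1) range[THEN not_dvd_if_mem_range] coprime by (rule mutual_powers_solvable_iff)
  show "\<forall>g1 \<in> {1..p-1}. \<forall>g2 \<in> {1..p-1}.
      [g1 ^ h = a] (mod p) \<and> [g1 ^ a = h] (mod p) \<and>
      [g2 ^ h = a] (mod p) \<and> [g2 ^ a = h] (mod p) \<longrightarrow> g1 = g2"
    using mutual_powers_base_unique[OF assms(1) coprime] by blast
  show "\<forall>g \<in> {1..p-1}. \<forall>u0 v0 :: int.
      [g ^ h = a] (mod p) \<and> [g ^ a = h] (mod p) \<and>
      [u0 * int h + v0 * int a = 1] (mod int (p - 1)) \<longrightarrow>
      [int g * int h ^ nat (- v0) * int a ^ nat (- u0) = int h ^ nat v0 * int a ^ nat u0] (mod int p)"
    using mutual_powers_base_explicit[OF assms(1)] not_dvd_if_mem_range by blast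
qed

end
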